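(* Let $t,w,w',n,g$ be positive integers. If there exists a Steiner system $\mathrm{S}(t,w',n)$ and a generalized Steiner system $\mathrm{GS}(t,w,w',g)$, then there exists a generalized Steiner system $\mathrm{GS}(t,w,n,g)$.
   Context: A Steiner system $\mathrm{S}(t,k,n)$ is a pair $(X,\mathcal{B})$ with $|X|=n$ and $\mathcal{B}$ a family of $k$-subsets (blocks) of $X$ such that every $t$-subset of $X$ is contained in exactly one block. For a set $Y$ of size $m$ (e.g. $Y=[m]$), let $X=Y\times[g]$ with groups $G_y=\{y\}\times[g]$, $y\in Y$. An H-design $\mathrm{H}(m,g,w,t)$ on this set is a family $\mathcal{A}$ of $w$-subsets (blocks) of $X$, each meeting every group in at most one point, such that each $t$-subset of $X$ whose points lie in $t$ distinct groups is contained in exactly one block. Each block $\{(y_1,a_1),\dots,(y_w,a_w)\}$ is identified with the word of length $m$ over $\{0\}\cup[g]$ (indexed by $Y$) having entry $a_s$ at coordinate $y_s$ and $0$ elsewhere. A generalized Steiner system $\mathrm{GS}(t,w,m,g)$ is an H-design $\mathrm{H}(m,g,w,t)$ such that any two distinct blocks, viewed as words, have Hamming distance at least $2(w-t)+1$. *)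

theory Defs
  imports Main
begin

text \<open>Steiner system S(t,k,n) on a ground set X (with card X = n).\<close>
definition steiner_system :: "nat \<Rightarrow> nat \<Rightarrow> 'a set \<Rightarrow> 'a set set \<Rightarrow> bool" where
  "steiner_system t k X B \<longleftrightarrow> finite X \<and> (\<forall>b\<in>B. b \<subseteq> X \<and> card b = k) \<and>
     (\<forall>T. T \<subseteq> X \<and> card T = t \<longrightarrow> (\<exists>!b. b \<in> B \<and> T \<subseteq> b))"

text \<open>Point set Y x [g] with Y = [m]; the group of y is {y} x [g].\<close>
definition point_set :: "nat \<Rightarrow> nat \<Rightarrow> (nat \<times> nat) set" where
  "point_set m g = {1..m} \<times> {1..g}"

definition H_design :: "nat \<Rightarrow> nat \<Rightarrow> nat \<Rightarrow> nat \<Rightarrow> (nat \<times> nat) set set \<Rightarrow> bool" where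
  "H_design m g w t A \<longleftrightarrow>
     (\<forall>b\<in>A. b \<subseteq> point_set m g \<and> card b = w \<and> (\<forall>p\<in>b. \<forall>q\<in>b. fst p = fst q \<longrightarrow> p = q)) \<and>
     (\<forall>T. T \<subseteq> point_set m g \<and> card T = t \<and> card (fst ` T) = t \<longrightarrow> (\<exists>!b. b \<in> A \<and> T \<subseteq> b))"

definition block_word :: "(nat \<times> nat) set \<Rightarrow> nat \<Rightarrow> nat" where
  "block_word b y = (if \<exists>a. (y, a) \<in> b then (THE a. (y, a) \<in> b) else 0)"

definition hamming :: "nat \<Rightarrow> (nat \<times> nat) set \<Rightarrow> (nat \<times> nat) set \<Rightarrow> nat" where
  "hamming m b b' = card {y \<in> {1..m}. block_word b y \<noteq> block_word b' y}"

definition GS :: "nat \<Rightarrow> nat \<Rightarrow> nat \<Rightarrow> nat \<Rightarrow> (nat \<times> nat) set set \<Rightarrow> bool" where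
  "GS t w m g A \<longleftrightarrow> H_design m g w t A \<and>
     (\<forall>b\<in>A. \<forall>b'\<in>A. b \<noteq> b' \<longrightarrow> int (hamming m b b') \<ge> 2 * (int w - int t) + 1)"

end

theory Submission
  imports Defs
begin

text \<open>Fix an S(t,w',n) on [n] and, for each of its blocks c, a bijection from [w'] onto c.
  Relabelling the coordinates of a GS(t,w,w',g) along each bijection places a copy of it on every
  block, and the union of these copies is the required design. A t-set of points in distinct groups
  is covered only by the copy on the unique Steiner block containing its groups, and there exactly
  once. Two words of the same copy are as far apart as in the GS(t,w,w',g). Two words of different
  copies have supports inside distinct Steiner blocks, which share fewer than t points, so the two
  supports of size w have a symmetric difference of more than 2(w-t) coordinates.\<close>

lemma finite_point_set [simp]: "finite (point_set m g)"
  by (simp add: point_set_def)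

lemma inj_on_image_subset_iff:
  assumes "inj_on f C" "A \<subseteq> C" "B \<subseteq> C"
  shows "f ` A \<subseteq> f ` B \<longleftrightarrow> A \<subseteq> B"
  using assms by (blast dest: inj_onD)

lemma block_word_eqI:
  assumes "inj_on fst b" "(y, x) \<in> b"
  shows "block_word b y = x"
proof -
  have "(THE a. (y, a) \<in> b) = x"
  proof (rule the_equality)
    fix a assume "(y, a) \<in> b"
    then show "a = x" using inj_onD[OF assms(1) _ _ assms(2)] by force
  qed (rule assms(2))
  then show ?thesis
    using assms(2) by (auto simp: block_word_def)
qed

lemma block_word_eq_0: "y \<notin> fst ` b \<Longrightarrow> block_word b y = 0"
  by (force simp: block_word_def)

lemma inj_on_fst_map_prod:
  assumes "inj_on \<psi> (fst ` a)" "inj_on fst a"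
  shows "inj_on fst (map_prod \<psi> id ` a)"
proof -
  have "inj_on (\<psi> \<circ> fst) a"
    using comp_inj_on[OF assms(2,1)] .
  then show ?thesis
    by (intro inj_on_imageI) (simp add: comp_def)
qed

lemma block_word_map_prod:
  assumes "inj_on \<psi> Y" "fst ` a \<subseteq> Y" "inj_on fst a" "i \<in> Y"
  shows "block_word (map_prod \<psi> id ` a) (\<psi> i) = block_word a i"
proof (cases "i \<in> fst ` a")
  case True
  then obtain x where x: "(i, x) \<in> a" by (auto simp: image_iff)
  note inj_on_fst_map_prod[OF inj_on_subset[OF assms(1,2)] assms(3)]
  moreover have "(\<psi> i, x) \<in> map_prod \<psi> id ` a"
    using x by (rule map_prod_imageI[where g = id, simplified])
  ultimately show ?thesis
    using block_word_eqI[OF assms(3) x] block_word_eqI by metis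
next
  case False
  have "\<psi> i \<notin> fst ` map_prod \<psi> id ` a"
  proof
    assume "\<psi> i \<in> fst ` map_prod \<psi> id ` a"
    then obtain p where "p \<in> a" "\<psi> (fst p) = \<psi> i" by auto
    then show False
      using False assms(1,2,4) inj_onD[of \<psi> Y "fst p" i] by auto
  qed
  with False show ?thesis
    by (simp add: block_word_eq_0)
qed

lemma block_word_map_prod_outside:
  "fst ` a \<subseteq> Y \<Longrightarrow> y \<notin> \<psi> ` Y \<Longrightarrow> block_word (map_prod \<psi> id ` a) y = 0"
  by (intro block_word_eq_0) auto

lemma hamming_map_prod:
  assumes \<psi>: "inj_on \<psi> {1..m}" "\<psi> ` {1..m} \<subseteq> {1..n}"
    and a: "fst ` a \<subseteq> {1..m}" "inj_on fst a"
    and a': "fst ` a' \<subseteq> {1..m}" "inj_on fst a'"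
  shows "hamming n (map_prod \<psi> id ` a) (map_prod \<psi> id ` a') = hamming m a a'"
proof -
  let ?D = "{i \<in> {1..m}. block_word a i \<noteq> block_word a' i}"
  let ?D' = "{y \<in> {1..n}. block_word (map_prod \<psi> id ` a) y \<noteq> block_word (map_prod \<psi> id ` a') y}"
  have "?D' = \<psi> ` ?D"
  proof (intro equalityI subsetI)
    fix y assume y: "y \<in> ?D'"
    have "y \<in> \<psi> ` {1..m}"
    proof (rule ccontr)
      assume "y \<notin> \<psi> ` {1..m}"
      then show False
        using y block_word_map_prod_outside[OF a(1)] block_word_map_prod_outside[OF a'(1)] by simp
    qed
    then show "y \<in> \<psi> ` ?D"
      using y block_word_map_prod[OF \<psi>(1) a] block_word_map_prod[OF \<psi>(1) a'] by auto
  next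
    fix y assume "y \<in> \<psi> ` ?D"
    then obtain i where i: "i \<in> ?D" "y = \<psi> i" by blast
    moreover have "\<psi> i \<in> {1..n}"
      using \<psi>(2) i(1) by blast
    ultimately show "y \<in> ?D'"
      using block_word_map_prod[OF \<psi>(1) a] block_word_map_prod[OF \<psi>(1) a'] by simp
  qed
  moreover have "inj_on \<psi> ?D"
    using \<psi>(1) by (rule inj_on_subset) auto
  ultimately show ?thesis
    by (simp add: hamming_def card_image)
qed

lemma card_sym_diff_supports_le_hamming:
  assumes "b \<subseteq> point_set n g" "inj_on fst b" "b' \<subseteq> point_set n g" "inj_on fst b'"
  shows "card (sym_diff (fst ` b) (fst ` b')) \<le> hamming n b b'"
proof -
  have differs: "fst ` b - fst ` b' \<subseteq> {y \<in> {1..n}. block_word b y \<noteq> block_word b' y}"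
    if b: "b \<subseteq> point_set n g" "inj_on fst b" for b b'
  proof
    fix y assume y: "y \<in> fst ` b - fst ` b'"
    then obtain x where x: "(y, x) \<in> b"
      by (auto simp: image_iff)
    then have "x \<ge> 1" "y \<in> {1..n}"
      using b(1) by (auto simp: point_set_def)
    then show "y \<in> {y \<in> {1..n}. block_word b y \<noteq> block_word b' y}"
      using block_word_eqI[OF b(2) x] block_word_eq_0[of y b'] y by auto
  qed
  have "{y \<in> {1..n}. block_word b' y \<noteq> block_word b y} = {y \<in> {1..n}. block_word b y \<noteq> block_word b' y}"
    by auto
  then have "(fst ` b - fst ` b') \<union> (fst ` b' - fst ` b)
      \<subseteq> {y \<in> {1..n}. block_word b y \<noteq> block_word b' y}"
    using differs[OF assms(1,2)] differs[OF assms(3,4)] by (metis Un_least)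
  then show ?thesis
    unfolding hamming_def by (intro card_mono) auto
qed

lemma hamming_ge_if_card_Int_supports_less:
  assumes b: "b \<subseteq> point_set n g" "inj_on fst b" "card b = w"
    and b': "b' \<subseteq> point_set n g" "inj_on fst b'" "card b' = w"
    and small: "card (fst ` b \<inter> fst ` b') < t"
  shows "int (hamming n b b') \<ge> 2 * (int w - int t) + 1"
proof -
  let ?k = "card (fst ` b \<inter> fst ` b')"
  have fin: "finite b" "finite b'"
    using b(1) b'(1) by (simp_all add: finite_subset)
  have card_supports: "card (fst ` b) = w" "card (fst ` b') = w"
    using b b' by (simp_all add: card_image)
  then have "card (fst ` b - fst ` b') = w - ?k" "card (fst ` b' - fst ` b) = w - ?k"
    using fin by (simp_all add: card_Diff_subset_Int Int_commute)
  moreover have "?k \<le> w"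
    using card_supports fin by (metis card_mono finite_imageI inf_le1)
  moreover have "card (sym_diff (fst ` b) (fst ` b')) = card (fst ` b - fst ` b') + card (fst ` b' - fst ` b)"
    using fin by (intro card_Un_disjoint) auto
  ultimately have "2 * (w - ?k) \<le> hamming n b b'"
    using card_sym_diff_supports_le_hamming[OF b(1,2) b'(1,2)] by linarith
  then have "2 * (int w - int ?k) \<le> int (hamming n b b')"
    using \<open>?k \<le> w\<close> by (metis of_nat_diff of_nat_le_iff of_nat_mult of_nat_numeral)
  moreover have "int ?k + 1 \<le> int t"
    using small by simp
  ultimately show ?thesis
    by presburger
qed

lemma steiner_system_bij_betw_image:
  assumes S: "steiner_system t k X B" and h: "bij_betw h X Y"
  shows "steiner_system t k Y ((`) h ` B)"
proof -
  have inj: "inj_on h X" and hX: "h ` X = Y"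
    using h by (auto simp: bij_betw_def)
  have B: "\<And>b. b \<in> B \<Longrightarrow> b \<subseteq> X \<and> card b = k" and "finite X"
    using S by (auto simp: steiner_system_def)
  have cover: "\<exists>!c. c \<in> (`) h ` B \<and> T \<subseteq> c" if T: "T \<subseteq> Y" "card T = t" for T
  proof -
    obtain T0 where T0: "T0 \<subseteq> X" "T = h ` T0"
      using T(1) hX by (auto simp: subset_image_iff)
    then have "card T0 = t"
      using T(2) card_image[OF inj_on_subset[OF inj T0(1)]] by simp
    then have "\<exists>!b. b \<in> B \<and> T0 \<subseteq> b"
      using S T0(1) by (simp add: steiner_system_def)
    then obtain b where b: "b \<in> B" "T0 \<subseteq> b" and unique: "\<And>b'. b' \<in> B \<Longrightarrow> T0 \<subseteq> b' \<Longrightarrow> b' = b"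
      by blast
    have lift: "T \<subseteq> h ` b' \<longleftrightarrow> T0 \<subseteq> b'" if "b' \<in> B" for b'
      using T0 B[OF that] inj by (simp add: inj_on_image_subset_iff)
    show ?thesis
      using b unique lift by (intro ex1I[of _ "h ` b"]) blast+
  qed
  have blocks: "h ` b \<subseteq> Y \<and> card (h ` b) = k" if "b \<in> B" for b
    using B[OF that] hX card_image[OF inj_on_subset[OF inj]] by auto
  have "finite Y"
    using \<open>finite X\<close> hX by blast
  then show ?thesis
    unfolding steiner_system_def by (simp add: cover blocks)
qed

lemma steiner_system_card_Int_less:
  assumes S: "steiner_system t k X B" and b: "b \<in> B" "b' \<in> B" "b \<noteq> b'"
  shows "card (b \<inter> b') < t"
proof (rule ccontr)
  assume "\<not> card (b \<inter> b') < t"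
  then obtain T where T: "T \<subseteq> b \<inter> b'" "card T = t"
    by (meson not_less obtain_subset_with_card_n)
  moreover have "b \<subseteq> X"
    using S b(1) by (simp add: steiner_system_def)
  ultimately have "T \<subseteq> X"
    by blast
  then have "\<exists>!c. c \<in> B \<and> T \<subseteq> c"
    using S T(2) by (simp add: steiner_system_def)
  then show False
    using T(1) b by blast
qed

lemma steiner_system_on_interval:
  assumes "card X = n" "steiner_system t k X B"
  obtains B' where "steiner_system t k {1..n} B'"
proof -
  obtain h where "bij_betw h X {1..n}"
    using assms finite_same_card_bij[of X "{1..n}"] by (auto simp: steiner_system_def)
  then show thesis
    using that steiner_system_bij_betw_image[OF assms(2)] by blast
qed

lemma steiner_system_block_enumerations:
  assumes "steiner_system t k {1..n} B"
  obtains \<psi> where "\<And>c. c \<in> B \<Longrightarrow> bij_betw (\<psi> c) {1..k} c"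
proof -
  have "\<forall>c \<in> B. \<exists>f. bij_betw f {1..k} c"
  proof
    fix c assume "c \<in> B"
    then have "finite c" "card c = k"
      using assms finite_subset[of c "{1..n}"] by (auto simp: steiner_system_def)
    then show "\<exists>f. bij_betw f {1..k} c"
      using ex_bij_betw_nat_finite_1 by blast
  qed
  then show thesis
    using that bchoice by metis
qed

locale steiner_substitution =
  fixes t w w' n g :: nat
    and B :: "nat set set"
    and A :: "(nat \<times> nat) set set"
    and \<psi> :: "nat set \<Rightarrow> nat \<Rightarrow> nat"
  assumes steiner: "steiner_system t w' {1..n} B"
    and GS: "GS t w w' g A"
    and \<psi>_bij: "c \<in> B \<Longrightarrow> bij_betw (\<psi> c) {1..w'} c"
begin

definition place :: "nat set \<Rightarrow> (nat \<times> nat) set \<Rightarrow> (nat \<times> nat) set" where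
  "place c a = map_prod (\<psi> c) id ` a"

definition substituted_blocks :: "(nat \<times> nat) set set" where
  "substituted_blocks = (\<Union>c\<in>B. place c ` A)"

lemma steiner_block: "c \<in> B \<Longrightarrow> c \<subseteq> {1..n} \<and> card c = w'"
  using steiner by (simp add: steiner_system_def)

lemma GS_block: "a \<in> A \<Longrightarrow> a \<subseteq> point_set w' g \<and> card a = w \<and> inj_on fst a"
  using GS unfolding GS_def H_design_def inj_on_def[symmetric] by blast

lemma fst_GS_block: "a \<in> A \<Longrightarrow> fst ` a \<subseteq> {1..w'}"
  using GS_block by (force simp: point_set_def)

lemma inj_on_\<psi>: "c \<in> B \<Longrightarrow> inj_on (\<psi> c) {1..w'}"
  using \<psi>_bij by (simp add: bij_betw_def)

lemma image_\<psi>: "c \<in> B \<Longrightarrow> \<psi> c ` {1..w'} = c"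
  using \<psi>_bij by (simp add: bij_betw_def)

lemma inj_on_map_prod_\<psi>: "c \<in> B \<Longrightarrow> inj_on (map_prod (\<psi> c) id) (point_set w' g)"
  unfolding point_set_def by (intro map_prod_inj_on inj_on_\<psi> inj_on_id)

lemma place_point_set: "c \<in> B \<Longrightarrow> place c (point_set w' g) = c \<times> {1..g}"
  unfolding place_def point_set_def by (intro map_prod_surj_on image_\<psi>) simp_all

lemma fst_place: "fst ` place c a = \<psi> c ` fst ` a"
  by (simp add: place_def image_image)

lemma place_GS_block:
  assumes "c \<in> B" "a \<in> A"
  shows "place c a \<subseteq> point_set n g" "card (place c a) = w" "inj_on fst (place c a)"
    and "fst ` place c a \<subseteq> c"
proof -
  have a: "a \<subseteq> point_set w' g" "card a = w" "inj_on fst a"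
    using GS_block[OF assms(2)] by auto
  have "place c a \<subseteq> c \<times> {1..g}"
    using a(1) place_point_set[OF assms(1)] by (metis image_mono place_def)
  then show "place c a \<subseteq> point_set n g" "fst ` place c a \<subseteq> c"
    using steiner_block[OF assms(1)] by (auto simp: point_set_def)
  show "card (place c a) = w"
    using card_image[OF inj_on_subset[OF inj_on_map_prod_\<psi>[OF assms(1)] a(1)]] a(2)
    by (simp add: place_def)
  show "inj_on fst (place c a)"
    unfolding place_def
    using inj_on_fst_map_prod[OF inj_on_subset[OF inj_on_\<psi>[OF assms(1)] fst_GS_block[OF assms(2)]] a(3)] .
qed

lemma substituted_block:
  "b \<in> substituted_blocks \<Longrightarrow> b \<subseteq> point_set n g \<and> card b = w \<and> inj_on fst b"
  using place_GS_block by (auto simp: substituted_blocks_def)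

lemma substituted_blocks_cover:
  assumes T: "T \<subseteq> point_set n g" "card T = t" "card (fst ` T) = t"
  shows "\<exists>!b. b \<in> substituted_blocks \<and> T \<subseteq> b"
proof -
  have "fst ` T \<subseteq> {1..n}"
    using T(1) by (auto simp: point_set_def)
  then have "\<exists>!c. c \<in> B \<and> fst ` T \<subseteq> c"
    using steiner T(3) by (simp add: steiner_system_def)
  then obtain c where c: "c \<in> B" "fst ` T \<subseteq> c"
    and c_unique: "\<And>c'. c' \<in> B \<Longrightarrow> fst ` T \<subseteq> c' \<Longrightarrow> c' = c"
    by metis
  have "T \<subseteq> c \<times> {1..g}"
    using T(1) c(2) by (auto simp: point_set_def mem_Times_iff image_subset_iff)
  then have "T \<subseteq> place c (point_set w' g)"
    using place_point_set[OF c(1)] by simp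
  then obtain T0 where T0: "T0 \<subseteq> point_set w' g" "T = place c T0"
    unfolding place_def subset_image_iff by blast
  have inj_T0: "inj_on (map_prod (\<psi> c) id) T0"
    using inj_on_subset[OF inj_on_map_prod_\<psi>[OF c(1)] T0(1)] .
  have "card T0 = t"
    using T(2) T0(2) card_image[OF inj_T0] by (simp add: place_def)
  moreover have "card (fst ` T0) = t"
  proof -
    have "inj_on (\<psi> c) (fst ` T0)"
      using inj_on_\<psi>[OF c(1)] by (rule inj_on_subset) (use T0(1) in \<open>force simp: point_set_def\<close>)
    then show ?thesis
      using T(3) T0(2) fst_place by (simp add: card_image)
  qed
  ultimately have "\<exists>!a. a \<in> A \<and> T0 \<subseteq> a"
    using GS T0(1) by (simp add: GS_def H_design_def)
  then obtain a where a: "a \<in> A" "T0 \<subseteq> a"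
    and a_unique: "\<And>a'. a' \<in> A \<Longrightarrow> T0 \<subseteq> a' \<Longrightarrow> a' = a"
    by metis
  have lift: "T \<subseteq> place c a' \<longleftrightarrow> T0 \<subseteq> a'" if "a' \<in> A" for a'
    using inj_on_image_subset_iff[OF inj_on_map_prod_\<psi>[OF c(1)] T0(1)] GS_block[OF that] T0(2)
    by (simp add: place_def)
  show ?thesis
  proof (rule ex1I[of _ "place c a"])
    show "place c a \<in> substituted_blocks \<and> T \<subseteq> place c a"
      using a c(1) lift by (auto simp: substituted_blocks_def)
  next
    fix b assume b: "b \<in> substituted_blocks \<and> T \<subseteq> b"
    then obtain c' a' where c'a': "c' \<in> B" "a' \<in> A" "b = place c' a'"
      by (auto simp: substituted_blocks_def)
    have "fst ` T \<subseteq> fst ` b"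
      using b by (intro image_mono) blast
    then have "c' = c"
      using c_unique[OF c'a'(1)] place_GS_block(4)[OF c'a'(1,2)] c'a'(3) by blast
    then show "b = place c a"
      using b c'a' lift a_unique by blast
  qed
qed

lemma substituted_blocks_distance:
  assumes "b \<in> substituted_blocks" "b' \<in> substituted_blocks" "b \<noteq> b'"
  shows "int (hamming n b b') \<ge> 2 * (int w - int t) + 1"
proof -
  obtain c a where ca: "c \<in> B" "a \<in> A" "b = place c a"
    using assms(1) by (auto simp: substituted_blocks_def)
  obtain c' a' where ca': "c' \<in> B" "a' \<in> A" "b' = place c' a'"
    using assms(2) by (auto simp: substituted_blocks_def)
  show ?thesis
  proof (cases "c = c'")
    case True
    have "\<psi> c ` {1..w'} \<subseteq> {1..n}"
      using image_\<psi>[OF ca(1)] steiner_block[OF ca(1)] by simp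
    then have "hamming n b b' = hamming w' a a'"
      unfolding ca(3) ca'(3) place_def True[symmetric]
      using hamming_map_prod[OF inj_on_\<psi>[OF ca(1)] _ fst_GS_block[OF ca(2)] _ fst_GS_block[OF ca'(2)]]
        GS_block[OF ca(2)] GS_block[OF ca'(2)] by blast
    moreover have "a \<noteq> a'"
      using True assms(3) ca(3) ca'(3) by blast
    ultimately show ?thesis
      using GS ca(2) ca'(2) by (simp add: GS_def)
  next
    case False
    have "finite (c \<inter> c')"
      using steiner_block[OF ca(1)] finite_subset by blast
    moreover have "fst ` b \<inter> fst ` b' \<subseteq> c \<inter> c'"
      using place_GS_block(4)[OF ca(1,2)] place_GS_block(4)[OF ca'(1,2)] ca(3) ca'(3) by blast
    ultimately have "card (fst ` b \<inter> fst ` b') \<le> card (c \<inter> c')"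
      by (rule card_mono)
    also have "\<dots> < t"
      using steiner_system_card_Int_less[OF steiner ca(1) ca'(1) False] .
    finally show ?thesis
      using substituted_block[OF assms(1)] substituted_block[OF assms(2)]
      by (intro hamming_ge_if_card_Int_supports_less) auto
  qed
qed

lemma GS_substituted_blocks: "GS t w n g substituted_blocks"
proof -
  have "H_design n g w t substituted_blocks"
    unfolding H_design_def inj_on_def[symmetric]
    using substituted_block substituted_blocks_cover by simp
  then show ?thesis
    unfolding GS_def using substituted_blocks_distance by simp
qed

end

theorem lemma3p1:
  fixes t w w' n g :: nat
  assumes "t > 0" "w > 0" "w' > 0" "n > 0" "g > 0"
    and "\<exists>(X::nat set) B. card X = n \<and> steiner_system t w' X B"
    and "\<exists>A. GS t w w' g A"
  shows "\<exists>A. GS t w n g A"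
proof -
  obtain B where steiner: "steiner_system t w' {1..n} B"
    using assms(6) steiner_system_on_interval by metis
  then obtain \<psi> where "\<And>c. c \<in> B \<Longrightarrow> bij_betw (\<psi> c) {1..w'} c"
    using steiner_system_block_enumerations by metis
  moreover obtain A where "GS t w w' g A"
    using assms(7) by blast
  ultimately interpret steiner_substitution t w w' n g B A \<psi>
    using steiner by unfold_locales
  show ?thesis
    using GS_substituted_blocks by blast
qed

end
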